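(* Let $K$ be a differential field of characteristic $0$ and let $M$ be a differential module over $K$ of dimension $4$ with $\det M=\mathbf{1}$. Then $M$ is isomorphic to $A\otimes B$ for differential modules $A,B$ of dimension $2$ with $\det A=\det B=\mathbf{1}$ if and only if there exists $F\in\mathrm{sym}^2M$ with $\partial F=0$ such that $F$ is non degenerate and has an isotropic subspace of dimension $2$.
   Context: A differential module over $K$ is a finite-dimensional $K$-vector space with an additive map $\partial$ satisfying the Leibniz rule; $\mathrm{sym}^2M$ and tensor products carry the induced derivations, $\det M=\Lambda^{\dim M}M$, and $\mathbf{1}$ is the trivial one-dimensional module. An element $F\in\mathrm{sym}^2M$ defines a symmetric bilinear form $(a,b)=F(a\otimes b)$ on $M^*$; non degenerate and (totally) isotropic subspace refer to this form. *)

theory Defs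
  imports "HOL-Analysis.Analysis"
begin

definition derivation :: "('k::field \<Rightarrow> 'k) \<Rightarrow> bool" where
  "derivation D \<longleftrightarrow> (\<forall>a b. D (a + b) = D a + D b) \<and> (\<forall>a b. D (a * b) = D a * b + a * D b)"

definition diff_module :: "('k::field \<Rightarrow> 'k) \<Rightarrow> ('k^'n \<Rightarrow> 'k^'n) \<Rightarrow> bool" where
  "diff_module D \<delta> \<longleftrightarrow> (\<forall>x y. \<delta> (x + y) = \<delta> x + \<delta> y) \<and>
     (\<forall>c x. \<delta> (c *s x) = D c *s x + c *s \<delta> x)"

definition dmod_iso :: "('k::field^'n \<Rightarrow> 'k^'n) \<Rightarrow> ('k^'m \<Rightarrow> 'k^'m) \<Rightarrow> bool" where
  "dmod_iso \<delta>1 \<delta>2 \<longleftrightarrow> (\<exists>f. Vector_Spaces.linear (*s) (*s) f \<and> bij f \<and> (\<forall>x. f (\<delta>1 x) = \<delta>2 (f x)))"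

text \<open>Coordinatewise derivation; on K^1 this is the trivial module 1.\<close>
definition dconst :: "('k::field \<Rightarrow> 'k) \<Rightarrow> 'k^'n \<Rightarrow> 'k^'n" where
  "dconst D v = (\<chi> i. D (v $ i))"

definition conn :: "('k::field^'n \<Rightarrow> 'k^'n) \<Rightarrow> 'k^'n^'n" where
  "conn \<delta> = (\<chi> i j. \<delta> (axis j 1) $ i)"

text \<open>det M = Lambda^n M, spanned by e_1 wedge ... wedge e_n, with
  d(e_1 wedge...wedge e_n) = trace(A) (e_1 wedge ... wedge e_n).\<close>
definition det_mod :: "('k::field \<Rightarrow> 'k) \<Rightarrow> ('k^'n \<Rightarrow> 'k^'n) \<Rightarrow> 'k^1 \<Rightarrow> 'k^1" where
  "det_mod D \<delta> v = dconst D v + trace (conn \<delta>) *s v"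

definition det_trivial :: "('k::field \<Rightarrow> 'k) \<Rightarrow> ('k^'n \<Rightarrow> 'k^'n) \<Rightarrow> bool" where
  "det_trivial D \<delta> \<longleftrightarrow> dmod_iso (det_mod D \<delta>) (dconst D :: 'k^1 \<Rightarrow> 'k^1)"

text \<open>Tensor product M1 (x) M2 on K^(n x m), basis e_i (x) e_j indexed by (i,j), with
  d(a (x) b) = da (x) b + a (x) db.\<close>
definition tensor_mod :: "('k::field \<Rightarrow> 'k) \<Rightarrow> ('k^'a \<Rightarrow> 'k^'a) \<Rightarrow> ('k^'b \<Rightarrow> 'k^'b)
    \<Rightarrow> 'k^('a \<times> 'b) \<Rightarrow> 'k^('a \<times> 'b)" where
  "tensor_mod D \<delta>1 \<delta>2 v = dconst D v +
     (\<chi> p q. conn \<delta>1 $ fst p $ fst q * (if snd p = snd q then 1 else 0)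
           + (if fst p = fst q then 1 else 0) * conn \<delta>2 $ snd p $ snd q) *v v"

text \<open>sym^2 M realised as the symmetric tensors in M (x) M (char 0).\<close>
definition is_sym2 :: "'k^('n::finite \<times> 'n) \<Rightarrow> bool" where
  "is_sym2 F \<longleftrightarrow> (\<forall>i j. F $ (i, j) = F $ (j, i))"

text \<open>The symmetric bilinear form on M^* defined by F; a in M^* given by its values a(e_i).\<close>
definition sym_form :: "'k::field^('n::finite \<times> 'n) \<Rightarrow> 'k^'n \<Rightarrow> 'k^'n \<Rightarrow> 'k" where
  "sym_form F a b = (\<Sum>i\<in>UNIV. \<Sum>j\<in>UNIV. F $ (i, j) * a $ i * b $ j)"

definition nondegenerate :: "'k::field^('n::finite \<times> 'n) \<Rightarrow> bool" where
  "nondegenerate F \<longleftrightarrow> (\<forall>a. (\<forall>b. sym_form F a b = 0) \<longrightarrow> a = 0)"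

definition has_isotropic_subspace :: "'k::field^('n::finite \<times> 'n) \<Rightarrow> nat \<Rightarrow> bool" where
  "has_isotropic_subspace F d \<longleftrightarrow>
     (\<exists>W. vec.subspace W \<and> vec.dim W = d \<and> (\<forall>a\<in>W. \<forall>b\<in>W. sym_form F a b = 0))"

end

theory Submission
  imports Defs
begin

text \<open>
  In the standard basis a differential module is \<open>\<partial> + A\<close> with \<open>A\<close> its connection matrix; an
  element of \<open>sym\<^sup>2M\<close> is a symmetric matrix \<open>X\<close>, and \<open>\<partial>F = 0\<close> reads \<open>X' + A X + X A\<^sup>T = 0\<close>.
  If \<open>M \<cong> N\<^sub>1 \<otimes> N\<^sub>2\<close>, the product \<open>\<omega> \<otimes> \<omega>\<close> of the standard symplectic forms of the factors is a
  split symmetric form, horizontal up to a scalar factor which trivialising \<open>det N\<^sub>1\<close> and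
  \<open>det N\<^sub>2\<close> removes. Conversely, a nondegenerate symmetric form with a two-dimensional isotropic
  subspace has a hyperbolic basis in which it is the constant form \<open>\<omega> \<otimes> \<omega>\<close>; in that basis the
  connection matrix lies in \<open>so(\<omega> \<otimes> \<omega>) = sl\<^sub>2 \<otimes> 1 + 1 \<otimes> sl\<^sub>2\<close>, so it is the connection of a
  tensor product of two traceless rank-two modules.
\<close>

lemma sum_UNIV_prod:
  "sum f (UNIV :: ('a::finite \<times> 'b::finite) set) = (\<Sum>i\<in>UNIV. \<Sum>j\<in>UNIV. f (i, j))"
  by (simp add: sum.cartesian_product UNIV_Times_UNIV[symmetric] del: UNIV_Times_UNIV)

lemma sum_UNIV_2x2: "sum f (UNIV :: (2 \<times> 2) set) = f (1, 1) + f (1, 2) + f (2, 1) + f (2, 2)"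
  by (simp add: sum_UNIV_prod sum_2 add.assoc)

lemma matrix_add_rdistrib: "(A + B) ** C = A ** C + B ** (C :: 'a::semiring_1^_^_)"
  by (simp add: matrix_matrix_mult_def vec_eq_iff sum.distrib distrib_right)

lemma matrix_diff_ldistrib: "A ** (B - C) = A ** B - A ** (C :: 'a::ring_1^_^_)"
  by (simp add: matrix_matrix_mult_def vec_eq_iff sum_subtractf right_diff_distrib)

lemma matrix_diff_rdistrib: "(A - B) ** C = A ** C - B ** (C :: 'a::ring_1^_^_)"
  by (simp add: matrix_matrix_mult_def vec_eq_iff sum_subtractf left_diff_distrib)

lemma matrix_uminus_left: "(- A) ** B = - (A ** (B :: 'a::ring_1^_^_))"
  by (simp add: matrix_matrix_mult_def vec_eq_iff sum_negf)

lemma matrix_uminus_right: "A ** (- B) = - (A ** (B :: 'a::ring_1^_^_))"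
  by (simp add: matrix_matrix_mult_def vec_eq_iff sum_negf)

lemma transpose_diff: "transpose (A - B) = transpose A - transpose B"
  by (simp add: transpose_def vec_eq_iff)

lemma mat_matrix_mult_nth: "(mat t ** M) $ i $ j = t * (M $ i $ j :: 'a::semiring_1)"
  by (simp add: matrix_matrix_mult_def mat_def if_distrib if_distribR cong: if_cong)

lemma matrix_mat_mult_nth: "(M ** mat t) $ i $ j = (M $ i $ j :: 'a::comm_semiring_1) * t"
  by (simp add: matrix_matrix_mult_def mat_def if_distrib if_distribR cong: if_cong)

lemma matrix_mat_mult_commute: "M ** mat s = mat s ** (M :: 'a::comm_semiring_1^'n^'m)"
  by (simp add: vec_eq_iff mat_matrix_mult_nth matrix_mat_mult_nth mult.commute)

lemma mat_mult_mat: "mat s ** mat t = (mat (s * t) :: 'a::comm_semiring_1^'n^'n)"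
  unfolding vec_eq_iff mat_matrix_mult_nth by (simp add: mat_def)

lemma inverse_matrices_unique:
  fixes P :: "'a::semiring_1^'n^'m"
  assumes "Q ** P = mat 1" "P ** C = mat 1"
  shows "Q = C"
proof -
  have "Q = Q ** (P ** C)" using assms(2) by simp
  also have "\<dots> = C" using assms(1) by (simp add: matrix_mul_assoc)
  finally show ?thesis .
qed

section \<open>Derivations and connection matrices\<close>

definition dmat :: "('k::field \<Rightarrow> 'k) \<Rightarrow> 'k^'n^'m \<Rightarrow> 'k^'n^'m" where
  "dmat D X = (\<chi> i j. D (X $ i $ j))"

definition conn_mod :: "('k::field \<Rightarrow> 'k) \<Rightarrow> 'k^'n^'n \<Rightarrow> 'k^'n \<Rightarrow> 'k^'n" where
  "conn_mod D A x = dconst D x + A *v x"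

text \<open>Base change by \<open>P\<close> turns the connection \<open>\<partial> + A\<close> into \<open>\<partial> + B\<close>.\<close>
definition gauge_equiv :: "('k::field \<Rightarrow> 'k) \<Rightarrow> 'k^'n^'n \<Rightarrow> 'k^'m^'m \<Rightarrow> bool" where
  "gauge_equiv D A B \<longleftrightarrow>
     (\<exists>P Q. P ** Q = mat 1 \<and> Q ** P = mat 1 \<and> P ** A = dmat D P + B ** P)"

text \<open>\<open>c\<close> is the scalar of an isomorphism from \<open>det\<close> of \<open>\<partial> + A\<close> to the trivial module.\<close>
definition det_trivial_conn :: "('k::field \<Rightarrow> 'k) \<Rightarrow> 'k^'n^'n \<Rightarrow> bool" where
  "det_trivial_conn D A \<longleftrightarrow> (\<exists>c. c \<noteq> 0 \<and> D c = c * trace A)"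

definition horizontal :: "('k::field \<Rightarrow> 'k) \<Rightarrow> 'k^'n^'n \<Rightarrow> 'k^'n^'n \<Rightarrow> bool" where
  "horizontal D A X \<longleftrightarrow> dmat D X + A ** X + X ** transpose A = 0"

definition kronecker_sum :: "'k::field^'a^'a \<Rightarrow> 'k^'b^'b \<Rightarrow> 'k^('a::finite \<times> 'b::finite)^('a \<times> 'b)" where
  "kronecker_sum A B = (\<chi> p q. A $ fst p $ fst q * (if snd p = snd q then 1 else 0)
     + (if fst p = fst q then 1 else 0) * B $ snd p $ snd q)"

lemma tensor_mod_eq_conn_mod: "tensor_mod D \<delta>1 \<delta>2 = conn_mod D (kronecker_sum (conn \<delta>1) (conn \<delta>2))"
  by (rule ext) (simp add: tensor_mod_def conn_mod_def kronecker_sum_def)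

lemma diff_module_eq_conn_mod:
  assumes "diff_module D \<delta>"
  shows "\<delta> = conn_mod D (conn \<delta>)"
proof
  fix x
  have "Modules.additive \<delta>" and sc: "\<And>c x. \<delta> (c *s x) = D c *s x + c *s \<delta> x"
    using assms unfolding diff_module_def Modules.additive_def by blast+
  have "\<delta> x = \<delta> (\<Sum>i\<in>UNIV. x $ i *s axis i 1)" by (simp add: basis_expansion)
  also have "\<dots> = (\<Sum>i\<in>UNIV. D (x $ i) *s axis i 1) + (\<Sum>i\<in>UNIV. x $ i *s \<delta> (axis i 1))"
    by (simp add: Modules.additive.sum[OF \<open>Modules.additive \<delta>\<close>] sc sum.distrib)
  also have "(\<Sum>i\<in>UNIV. D (x $ i) *s axis i 1) = dconst D x"
    using basis_expansion[of "dconst D x"] by (simp add: dconst_def)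
  also have "(\<Sum>i\<in>UNIV. x $ i *s \<delta> (axis i 1)) = conn \<delta> *v x"
    by (simp add: vec_eq_iff conn_def matrix_vector_mult_def mult.commute)
  finally show "\<delta> x = conn_mod D (conn \<delta>) x" by (simp add: conn_mod_def)
qed

locale derivation_field =
  fixes D :: "'k::field \<Rightarrow> 'k"
  assumes derivation: "derivation D"
begin

sublocale D: Modules.additive D
  using derivation by unfold_locales (simp add: derivation_def)

declare D.zero [simp]

lemma D_mult: "D (a * b) = D a * b + a * D b"
  using derivation unfolding derivation_def by blast

lemma D_one [simp]: "D 1 = 0"
  using D_mult[of 1 1] add_cancel_right_right[of "D 1" "D 1"] by simp

lemma D_inverse:
  assumes "a \<noteq> 0"
  shows "D (inverse a) = - D a * inverse a * inverse a"
proof -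
  have "0 = D (a * inverse a)" using assms by simp
  also have "\<dots> = D a * inverse a + a * D (inverse a)" by (rule D_mult)
  finally have "a * D (inverse a) = - D a * inverse a" by (simp add: eq_neg_iff_add_eq_0 add.commute)
  then show ?thesis using assms by (simp add: field_simps)
qed

lemma dmat_mult: "dmat D (X ** Y) = dmat D X ** Y + X ** dmat D Y"
  by (simp add: dmat_def matrix_matrix_mult_def vec_eq_iff D.sum D_mult sum.distrib)

lemma dmat_transpose: "dmat D (transpose X) = transpose (dmat D X)"
  by (simp add: dmat_def transpose_def vec_eq_iff)

lemma dmat_mat: "dmat D (mat c) = mat (D c)"
  by (simp add: dmat_def mat_def vec_eq_iff if_distrib[where f = D] cong: if_cong)

lemma dconst_matrix_vector_mult: "dconst D (X *v x) = dmat D X *v x + X *v dconst D x"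
  by (simp add: dconst_def dmat_def matrix_vector_mult_def vec_eq_iff D.sum D_mult sum.distrib)

lemma diff_module_conn_mod: "diff_module D (conn_mod D A)"
  unfolding diff_module_def conn_mod_def dconst_def
  by (simp add: vec_eq_iff D.add D_mult vec.scale algebra_simps)

lemma conn_conn_mod: "conn (conn_mod D A) = A"
  unfolding conn_def conn_mod_def
  by (simp add: vec_eq_iff dconst_def matrix_vector_mult_def axis_def if_distrib cong: if_cong)

section \<open>Gauge equivalence\<close>

lemma dmod_iso_conn_mod_iff: "dmod_iso (conn_mod D A) (conn_mod D B) \<longleftrightarrow> gauge_equiv D A B"
proof
  assume "dmod_iso (conn_mod D A) (conn_mod D B)"
  then obtain f where lf: "Vector_Spaces.linear (*s) (*s) f" and bf: "bij f"
    and ff: "\<And>x. f (conn_mod D A x) = conn_mod D B (f x)"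
    unfolding dmod_iso_def by blast
  define P where "P = matrix f"
  have fP: "f = (*v) P" using matrix_works[OF lf] by (simp add: P_def fun_eq_iff)
  obtain Q where Q: "Q ** P = mat 1"
    using bf matrix_left_invertible_injective unfolding fP by (blast dest: bij_is_inj)
  obtain C where C: "P ** C = mat 1"
    using bf matrix_right_invertible_surjective unfolding fP by (blast dest: bij_is_surj)
  have "(P ** A) *v x = (dmat D P + B ** P) *v x" for x
    using ff[of x] by (simp add: fP conn_mod_def dconst_matrix_vector_mult
        matrix_vector_mul_assoc[symmetric] algebra_simps)
  then have "P ** A = dmat D P + B ** P" by (simp add: matrix_eq)
  with Q C inverse_matrices_unique[OF Q C] show "gauge_equiv D A B"
    unfolding gauge_equiv_def by blast
next
  assume "gauge_equiv D A B"
  then obtain P Q where PQ: "P ** Q = mat 1" and QP: "Q ** P = mat 1"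
    and PA: "P ** A = dmat D P + B ** P"
    unfolding gauge_equiv_def by blast
  have "bij ((*v) P)"
    by (rule bij_betw_byWitness[where f' = "(*v) Q"]) (auto simp: matrix_vector_mul_assoc PQ QP)
  moreover have "P *v conn_mod D A x = conn_mod D B (P *v x)" for x
    by (simp add: conn_mod_def PA dconst_matrix_vector_mult matrix_vector_right_distrib
        matrix_vector_mult_add_rdistrib matrix_vector_mul_assoc add.assoc)
  ultimately show "dmod_iso (conn_mod D A) (conn_mod D B)"
    unfolding dmod_iso_def using matrix_vector_mul_linear_gen by blast
qed

lemma gauge_equiv_sym:
  assumes "gauge_equiv D A B"
  shows "gauge_equiv D B A"
proof -
  obtain P Q where PQ: "P ** Q = mat 1" and QP: "Q ** P = mat 1"
    and PA: "P ** A = dmat D P + B ** P"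
    using assms unfolding gauge_equiv_def by blast
  have "dmat D Q ** P + Q ** dmat D P = 0"
    using arg_cong[OF QP, of "dmat D"] by (simp add: dmat_mult dmat_mat)
  then have "Q ** dmat D P = - (dmat D Q ** P)"
    by (simp add: eq_neg_iff_add_eq_0 add.commute)
  then have dP: "Q ** dmat D P ** Q = - dmat D Q"
    using PQ by (simp add: matrix_uminus_left flip: matrix_mul_assoc)
  have "A ** Q = Q ** (P ** A) ** Q" using QP by (simp add: matrix_mul_assoc)
  also have "\<dots> = - dmat D Q + Q ** B"
    using PA PQ dP by (simp add: matrix_add_ldistrib matrix_add_rdistrib matrix_mul_assoc[symmetric])
  finally have "Q ** B = dmat D Q + A ** Q" by (simp add: algebra_simps)
  with PQ QP show ?thesis unfolding gauge_equiv_def by blast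
qed

lemma horizontal_gauge:
  assumes PA: "P ** A = dmat D P + B ** P" and X: "horizontal D A X"
  shows "horizontal D B (P ** X ** transpose P)"
proof -
  have dP: "dmat D P = P ** A - B ** P" using PA by simp
  have dX: "dmat D X = - (A ** X) - X ** transpose A"
    using X unfolding horizontal_def by (simp add: eq_neg_iff_add_eq_0 algebra_simps)
  show ?thesis unfolding horizontal_def
    by (simp add: dmat_mult dmat_transpose dP dX matrix_add_ldistrib matrix_add_rdistrib
      matrix_diff_ldistrib matrix_diff_rdistrib matrix_uminus_left matrix_uminus_right
      transpose_diff matrix_transpose_mul matrix_mul_assoc)
qed

lemma horizontal_constant_form_gauge:
  assumes PQ: "P ** Q = mat 1" and QP: "Q ** P = mat 1" and X: "horizontal D A X"
    and const: "dmat D (P ** X ** transpose P) = 0"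
  shows "\<exists>B. gauge_equiv D A B \<and>
    B ** (P ** X ** transpose P) + (P ** X ** transpose P) ** transpose B = 0"
proof -
  define B where "B = (P ** A - dmat D P) ** Q"
  have "B ** P = P ** A - dmat D P"
    using QP by (simp add: B_def flip: matrix_mul_assoc)
  then have PA: "P ** A = dmat D P + B ** P" by simp
  have "horizontal D B (P ** X ** transpose P)" by (rule horizontal_gauge[OF PA X])
  with const PQ QP PA show ?thesis
    unfolding horizontal_def gauge_equiv_def by auto
qed

lemma det_mod_eq_conn_mod: "det_mod D \<delta> = conn_mod D (mat (trace (conn \<delta>)))"
  by (rule ext) (simp add: det_mod_def conn_mod_def vec_eq_iff matrix_vector_mult_def mat_def sum_1)

lemma det_trivial_iff: "det_trivial D \<delta> \<longleftrightarrow> det_trivial_conn D (conn \<delta>)"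
proof -
  let ?t = "trace (conn \<delta>)"
  have "dconst D = conn_mod D (0 :: 'k^1^1)" by (rule ext) (simp add: conn_mod_def)
  then have "det_trivial D \<delta> \<longleftrightarrow> gauge_equiv D (mat ?t :: 'k^1^1) (0 :: 'k^1^1)"
    by (simp add: det_trivial_def det_mod_eq_conn_mod dmod_iso_conn_mod_iff)
  also have "\<dots> \<longleftrightarrow> (\<exists>c. c \<noteq> 0 \<and> D c = c * ?t)"
  proof
    assume "gauge_equiv D (mat ?t :: 'k^1^1) (0 :: 'k^1^1)"
    then obtain P Q :: "'k^1^1" where "P ** Q = mat 1" "P ** mat ?t = dmat D P"
      unfolding gauge_equiv_def by auto
    then have "(P ** Q) $ 1 $ 1 = 1" "(P ** mat ?t) $ 1 $ 1 = dmat D P $ 1 $ 1"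
      by (simp_all add: mat_def)
    then have "P $ 1 $ 1 * Q $ 1 $ 1 = 1" "P $ 1 $ 1 * ?t = D (P $ 1 $ 1)"
      by (simp_all add: matrix_matrix_mult_def matrix_mat_mult_nth dmat_def sum_1 mat_def)
    then show "\<exists>c. c \<noteq> 0 \<and> D c = c * ?t"
      by (intro exI[of _ "P $ 1 $ 1"]) (auto simp: mult.commute)
  next
    assume "\<exists>c. c \<noteq> 0 \<and> D c = c * ?t"
    then obtain c where "c \<noteq> 0" "D c = c * ?t" by blast
    then have "mat c ** mat (inverse c) = (mat 1 :: 'k^1^1)"
      "mat (inverse c) ** mat c = (mat 1 :: 'k^1^1)"
      "mat c ** mat ?t = dmat D (mat c) + 0 ** (mat c :: 'k^1^1)"
      by (simp_all add: mat_mult_mat dmat_mat)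
    then show "gauge_equiv D (mat ?t :: 'k^1^1) (0 :: 'k^1^1)" unfolding gauge_equiv_def by blast
  qed
  finally show ?thesis unfolding det_trivial_conn_def .
qed

lemma tensor_decomposition_iff_gauge_equiv:
  fixes \<delta> :: "'k^'n \<Rightarrow> 'k^'n"
  assumes "diff_module D \<delta>"
  shows "(\<exists>(\<delta>A :: 'k^'a \<Rightarrow> 'k^'a) (\<delta>B :: 'k^'b \<Rightarrow> 'k^'b).
            diff_module D \<delta>A \<and> diff_module D \<delta>B \<and> det_trivial D \<delta>A \<and> det_trivial D \<delta>B \<and>
            dmod_iso \<delta> (tensor_mod D \<delta>A \<delta>B))
     \<longleftrightarrow> (\<exists>(a :: 'k^'a^'a) (b :: 'k^'b^'b). det_trivial_conn D a \<and> det_trivial_conn D b \<and>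
            gauge_equiv D (conn \<delta>) (kronecker_sum a b))"
    (is "?modules \<longleftrightarrow> ?matrices")
proof -
  have iso: "dmod_iso \<delta> (tensor_mod D \<delta>A \<delta>B) \<longleftrightarrow>
      gauge_equiv D (conn \<delta>) (kronecker_sum (conn \<delta>A) (conn \<delta>B))"
    for \<delta>A :: "'k^'a \<Rightarrow> 'k^'a" and \<delta>B :: "'k^'b \<Rightarrow> 'k^'b"
    by (subst diff_module_eq_conn_mod[OF assms])
      (simp add: tensor_mod_eq_conn_mod dmod_iso_conn_mod_iff)
  show ?thesis
  proof
    assume ?modules
    then obtain \<delta>A :: "'k^'a \<Rightarrow> 'k^'a" and \<delta>B :: "'k^'b \<Rightarrow> 'k^'b"
      where "det_trivial D \<delta>A" "det_trivial D \<delta>B" "dmod_iso \<delta> (tensor_mod D \<delta>A \<delta>B)"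
      by blast
    then show ?matrices
      unfolding iso det_trivial_iff by (intro exI[of _ "conn \<delta>A"] exI[of _ "conn \<delta>B"]) blast
  next
    assume ?matrices
    then obtain a :: "'k^'a^'a" and b :: "'k^'b^'b"
      where "det_trivial_conn D a" "det_trivial_conn D b" "gauge_equiv D (conn \<delta>) (kronecker_sum a b)"
      by blast
    then show ?modules
      by (intro exI[of _ "conn_mod D a"] exI[of _ "conn_mod D b"])
        (simp add: iso det_trivial_iff diff_module_conn_mod conn_conn_mod)
  qed
qed

end

section \<open>Symmetric bilinear forms\<close>

definition form_matrix :: "'k::field^('n::finite \<times> 'n) \<Rightarrow> 'k^'n^'n" where
  "form_matrix F = (\<chi> i j. F $ (i, j))"

definition bilin :: "'k::field^'n^'n \<Rightarrow> 'k^'n \<Rightarrow> 'k^'n \<Rightarrow> 'k" where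
  "bilin X a b = (\<Sum>i\<in>UNIV. \<Sum>j\<in>UNIV. X $ i $ j * a $ i * b $ j)"

definition vec_dot :: "'k::field^'n \<Rightarrow> 'k^'n \<Rightarrow> 'k" where
  "vec_dot u v = (\<Sum>j\<in>UNIV. u $ j * v $ j)"

lemma kronecker_sum_mult_vec_nth:
  "(kronecker_sum A B *v F) $ (i, j) = (\<Sum>k\<in>UNIV. A $ i $ k * F $ (k, j)) + (\<Sum>l\<in>UNIV. B $ j $ l * F $ (i, l))"
proof -
  have indicator_mult: "(if P then 1 else 0) * x * y = (if P then x * y else 0)"
    "x * (if P then 1 else 0) * y = (if P then x * y else 0)" for P and x y :: 'a
    by simp_all
  have "(kronecker_sum A B *v F) $ (i, j) =
      (\<Sum>k\<in>UNIV. \<Sum>l\<in>UNIV. if j = l then A $ i $ k * F $ (k, l) else 0)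
      + (\<Sum>k\<in>UNIV. \<Sum>l\<in>UNIV. if i = k then B $ j $ l * F $ (k, l) else 0)"
    unfolding kronecker_sum_def matrix_vector_mult_def sum_UNIV_prod
    by (simp add: distrib_right sum.distrib indicator_mult cong: if_cong)
  then show ?thesis by (simp add: sum.swap[of _ UNIV UNIV])
qed

lemma conn_mod_kronecker_sum_eq_zero_iff:
  "conn_mod D (kronecker_sum A A) F = 0 \<longleftrightarrow> horizontal D A (form_matrix F)"
  by (simp add: vec_eq_iff conn_mod_def kronecker_sum_mult_vec_nth horizontal_def dmat_def
      form_matrix_def dconst_def matrix_matrix_mult_def transpose_def mult.commute add.assoc)

lemma form_matrix_surj: "\<exists>F. form_matrix F = X"
  by (rule exI[of _ "\<chi> p. X $ fst p $ snd p"]) (simp add: form_matrix_def vec_eq_iff)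

lemma is_sym2_iff: "is_sym2 F \<longleftrightarrow> transpose (form_matrix F) = form_matrix F"
  by (auto simp: is_sym2_def form_matrix_def transpose_def vec_eq_iff)

lemma sym_form_eq_bilin: "sym_form F = bilin (form_matrix F)"
  by (simp add: fun_eq_iff sym_form_def bilin_def form_matrix_def)

lemma bilin_eq_vec_dot: "bilin X a b = vec_dot (a v* X) b"
proof -
  have "bilin X a b = (\<Sum>j\<in>UNIV. \<Sum>i\<in>UNIV. X $ i $ j * a $ i * b $ j)"
    unfolding bilin_def by (rule sum.swap)
  then show ?thesis
    by (simp add: vec_dot_def vector_matrix_mult_def sum_distrib_right sum_distrib_left mult_ac)
qed

lemma nondegenerate_iff: "nondegenerate F \<longleftrightarrow> (\<forall>a. a v* form_matrix F = 0 \<longrightarrow> a = 0)"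
proof -
  have "(\<forall>b. bilin X a b = 0) \<longleftrightarrow> a v* X = 0" for X and a :: "'a^'b"
    by (auto simp: bilin_eq_vec_dot vec_dot_def vec_eq_iff axis_def
        if_distrib if_distribR cong: if_cong dest: spec[of _ "axis _ 1"])
  then show ?thesis by (simp add: nondegenerate_def sym_form_eq_bilin)
qed

lemma nondegenerate_if_right_inverse:
  assumes "form_matrix F ** Y = mat 1"
  shows "nondegenerate F"
  unfolding nondegenerate_iff
  by (metis assms vector_matrix_mul_assoc vector_matrix_mul_rid vector_matrix_mult_0)

lemma congruence_nth: "(P ** X ** transpose P) $ p $ q = bilin X (P $ p) (P $ q)"
proof -
  have "(P ** X ** transpose P) $ p $ q = (\<Sum>j\<in>UNIV. \<Sum>i\<in>UNIV. X $ i $ j * P $ p $ i * P $ q $ j)"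
    by (simp add: matrix_matrix_mult_def transpose_def sum_distrib_right sum_distrib_left mult_ac)
  also have "\<dots> = bilin X (P $ p) (P $ q)"
    unfolding bilin_def by (rule sum.swap[symmetric])
  finally show ?thesis .
qed

lemma bilin_congruence: "bilin (Q ** G ** transpose Q) a b = bilin G (a v* Q) (b v* Q)"
proof -
  have vec_dot_mv: "vec_dot (Q *v y) b = vec_dot y (b v* Q)" for y
  proof -
    have "vec_dot (Q *v y) b = (\<Sum>j\<in>UNIV. \<Sum>p\<in>UNIV. Q $ j $ p * y $ p * b $ j)"
      by (simp add: vec_dot_def matrix_vector_mult_def sum_distrib_right)
    also have "\<dots> = (\<Sum>p\<in>UNIV. \<Sum>j\<in>UNIV. Q $ j $ p * y $ p * b $ j)"
      by (rule sum.swap)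
    finally show ?thesis
      by (simp add: vec_dot_def vector_matrix_mult_def sum_distrib_left mult_ac)
  qed
  have "a v* (Q ** G ** transpose Q) = Q *v ((a v* Q) v* G)"
    by (simp add: vector_matrix_mul_assoc[symmetric])
  then show ?thesis by (simp add: bilin_eq_vec_dot vec_dot_mv)
qed

lemma bilin_sym:
  assumes "transpose X = X"
  shows "bilin X a b = bilin X b a"
proof -
  have "X $ j $ i = X $ i $ j" for i j
    using arg_cong[of _ _ "\<lambda>M. M $ i $ j", OF assms] by (simp add: transpose_def)
  then show ?thesis unfolding bilin_def by (subst sum.swap) (simp add: mult_ac)
qed

lemma bilin_add_left: "bilin X (a + a') b = bilin X a b + bilin X a' b"
  by (simp add: bilin_def ring_distribs sum.distrib)

lemma bilin_add_right: "bilin X a (b + b') = bilin X a b + bilin X a b'"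
  by (simp add: bilin_def ring_distribs sum.distrib)

lemma bilin_diff_left: "bilin X (a - a') b = bilin X a b - bilin X a' b"
  by (simp add: bilin_def ring_distribs sum_subtractf)

lemma bilin_diff_right: "bilin X a (b - b') = bilin X a b - bilin X a b'"
  by (simp add: bilin_def ring_distribs sum_subtractf)

lemma bilin_scale_left: "bilin X (c *s a) b = c * bilin X a b"
  by (simp add: bilin_def sum_distrib_left mult_ac)

lemma bilin_scale_right: "bilin X a (c *s b) = c * bilin X a b"
  by (simp add: bilin_def sum_distrib_left mult_ac)

lemma bilin_uminus_left: "bilin X (- a) b = - bilin X a b"
  by (simp add: bilin_def sum_negf)

lemma bilin_uminus_right: "bilin X a (- b) = - bilin X a b"
  by (simp add: bilin_def sum_negf)

lemmas bilin_simps = bilin_add_left bilin_add_right bilin_diff_left bilin_diff_right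
  bilin_scale_left bilin_scale_right bilin_uminus_left bilin_uminus_right

lemma span_pair_iff: "x \<in> vec.span {u, v} \<longleftrightarrow> (\<exists>s t. x = s *s u + t *s v)"
proof -
  have "x \<in> vec.span {u, v} \<longleftrightarrow> (\<exists>s. x - s *s u \<in> vec.span {v})"
    by (rule vec.span_breakdown_eq)
  also have "\<dots> \<longleftrightarrow> (\<exists>s t. x - s *s u = t *s v)"
    by (auto simp: vec.span_singleton)
  also have "\<dots> \<longleftrightarrow> (\<exists>s t. x = s *s u + t *s v)"
    by (simp add: diff_eq_eq add.commute)
  finally show ?thesis .
qed

lemma independent_pair_iff:
  fixes u v :: "'k::field^'n"
  shows "u \<noteq> v \<and> vec.independent {u, v} \<longleftrightarrow> (\<forall>s t. s *s u + t *s v = 0 \<longrightarrow> s = 0 \<and> t = 0)"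
proof
  assume uv: "u \<noteq> v \<and> vec.independent {u, v}"
  then have v0: "v \<noteq> 0" and us: "u \<notin> vec.span {v}"
    by (auto simp: vec.independent_insert)
  show "\<forall>s t. s *s u + t *s v = 0 \<longrightarrow> s = 0 \<and> t = 0"
  proof (intro allI impI)
    fix s t assume st: "s *s u + t *s v = 0"
    have "s = 0"
    proof (rule ccontr)
      assume "s \<noteq> 0"
      with st have "u = (- t / s) *s v"
        by (auto simp: vec_eq_iff field_simps add_eq_0_iff2)
      then show False using us rangeI[of "\<lambda>k. k *s v" "- t / s"] by (simp add: vec.span_singleton)
    qed
    with st v0 show "s = 0 \<and> t = 0" by simp
  qed
next
  assume ind: "\<forall>s t. s *s u + t *s v = 0 \<longrightarrow> s = 0 \<and> t = 0"
  have "v \<noteq> 0" using ind[rule_format, of 0 1] by auto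
  moreover have "u \<notin> vec.span {v}"
  proof
    assume "u \<in> vec.span {v}"
    then obtain c where "u = c *s v" by (auto simp: vec.span_singleton)
    then have "1 *s u + (- c) *s v = 0" by (simp add: vec_eq_iff)
    then show False using ind by fastforce
  qed
  moreover have "u \<noteq> v" using ind[rule_format, of 1 "-1"] by auto
  ultimately show "u \<noteq> v \<and> vec.independent {u, v}" by (simp add: vec.independent_insert)
qed

lemma has_isotropic_subspace_2_iff:
  "has_isotropic_subspace F 2 \<longleftrightarrow>
    (\<exists>u v. (\<forall>s t. s *s u + t *s v = 0 \<longrightarrow> s = 0 \<and> t = 0) \<and>
      (\<forall>x\<in>{u, v}. \<forall>y\<in>{u, v}. sym_form F x y = 0))"
proof
  assume "has_isotropic_subspace F 2"
  then obtain W where W: "vec.subspace W" "vec.dim W = 2" "\<forall>a\<in>W. \<forall>b\<in>W. sym_form F a b = 0"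
    unfolding has_isotropic_subspace_def by blast
  obtain B where B: "B \<subseteq> W" "vec.independent B" "card B = vec.dim W"
    by (meson vec.basis_exists)
  then obtain u v where uv: "B = {u, v}" "u \<noteq> v" using W(2) by (auto simp: card_2_iff)
  then have "\<forall>s t. s *s u + t *s v = 0 \<longrightarrow> s = 0 \<and> t = 0"
    using B(2) independent_pair_iff[of u v] by simp
  moreover have "\<forall>x\<in>{u, v}. \<forall>y\<in>{u, v}. sym_form F x y = 0"
    using B(1) W(3) uv(1) by blast
  ultimately show "\<exists>u v. (\<forall>s t. s *s u + t *s v = 0 \<longrightarrow> s = 0 \<and> t = 0) \<and>
      (\<forall>x\<in>{u, v}. \<forall>y\<in>{u, v}. sym_form F x y = 0)" by blast
next
  assume "\<exists>u v. (\<forall>s t. s *s u + t *s v = 0 \<longrightarrow> s = 0 \<and> t = 0) \<and>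
      (\<forall>x\<in>{u, v}. \<forall>y\<in>{u, v}. sym_form F x y = 0)"
  then obtain u v where ind: "\<forall>s t. s *s u + t *s v = 0 \<longrightarrow> s = 0 \<and> t = 0"
    and iso: "\<forall>x\<in>{u, v}. \<forall>y\<in>{u, v}. sym_form F x y = 0" by blast
  have uv: "u \<noteq> v" "vec.independent {u, v}" using ind independent_pair_iff by blast+
  show "has_isotropic_subspace F 2"
    unfolding has_isotropic_subspace_def
  proof (intro exI conjI ballI)
    show "vec.subspace (vec.span {u, v})" by simp
    show "vec.dim (vec.span {u, v}) = 2" using vec.dim_span_eq_card_independent[OF uv(2)] uv(1) by simp
    fix x y assume "x \<in> vec.span {u, v}" "y \<in> vec.span {u, v}"
    then obtain s t s' t' where "x = s *s u + t *s v" "y = s' *s u + t' *s v"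
      by (auto simp: span_pair_iff)
    with iso show "sym_form F x y = 0" by (simp add: sym_form_eq_bilin bilin_simps)
  qed
qed

text \<open>The dual vectors are the columns of a right inverse of the \<open>2 \<times> n\<close> matrix with rows
  \<open>u X\<close> and \<open>v X\<close>, whose rows are independent by nondegeneracy.\<close>
lemma nondegenerate_dual_pair:
  fixes X :: "'k::field^'n^'n"
  assumes nd: "\<And>a. a v* X = 0 \<Longrightarrow> a = 0"
    and ind: "\<And>s t. s *s u + t *s v = 0 \<Longrightarrow> s = 0 \<and> t = 0"
  obtains z1 z2 where "bilin X u z1 = 1" "bilin X u z2 = 0" "bilin X v z1 = 0" "bilin X v z2 = 1"
proof -
  define R :: "'k^'n^2" where "R = (\<chi> i. if i = 1 then u v* X else v v* X)"
  have "\<exists>C. R ** C = mat 1"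
    unfolding matrix_right_invertible_independent_rows
  proof (intro allI impI)
    fix c :: "2 \<Rightarrow> 'k" and i
    assume "(\<Sum>i\<in>UNIV. c i *s row i R) = 0"
    then have "(c 1 *s u + c 2 *s v) v* X = 0"
      by (simp add: sum_2 R_def row_def vector_matrix_left_distrib scalar_vector_matrix_assoc)
    then have "c 1 = 0 \<and> c 2 = 0" using nd ind by blast
    then show "c i = 0" using exhaust_2[of i] by auto
  qed
  then obtain C where C: "R ** C = mat 1" by blast
  have dual: "bilin X w (column j C) = (R ** C) $ i $ j" if "R $ i = w v* X" for w i j
    using that by (simp add: bilin_eq_vec_dot vec_dot_def matrix_matrix_mult_def column_def)
  have "R $ 1 = u v* X" "R $ 2 = v v* X" by (simp_all add: R_def)
  from dual[OF this(1)] dual[OF this(2)] show ?thesis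
    by (intro that[of "column 1 C" "column 2 C"]) (simp_all add: C mat_def)
qed

section \<open>The split form \<open>\<omega> \<otimes> \<omega>\<close>\<close>

definition symplectic2 :: "'k::field^2^2" where
  "symplectic2 = (\<chi> i j. if i = 1 \<and> j = 2 then 1 else if i = 2 \<and> j = 1 then -1 else 0)"

definition split_form :: "'k::field^(2 \<times> 2)^(2 \<times> 2)" where
  "split_form = (\<chi> p q. symplectic2 $ fst p $ fst q * symplectic2 $ snd p $ snd q)"

lemma split_form_sym: "transpose split_form = split_form"
  by (simp add: vec_eq_iff transpose_def split_form_def symplectic2_def forall_2)

lemma split_form_square: "split_form ** split_form = mat 1"
  unfolding vec_eq_iff split_paired_All forall_2
  by (simp add: matrix_matrix_mult_def split_form_def symplectic2_def mat_def sum_UNIV_2x2)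

lemma (in derivation_field) dmat_split_form: "dmat D split_form = 0"
  unfolding vec_eq_iff split_paired_All forall_2
  by (simp add: dmat_def split_form_def symplectic2_def D.minus)

lemma kronecker_sum_split_form:
  "kronecker_sum a b ** split_form + split_form ** transpose (kronecker_sum a b)
     = mat (trace a + trace b) ** split_form"
  unfolding vec_eq_iff split_paired_All forall_2 mat_matrix_mult_nth
  by (simp add: kronecker_sum_def trace_def sum_2 matrix_matrix_mult_def split_form_def
      symplectic2_def transpose_def sum_UNIV_2x2)

lemma split_form_lie_algebra:
  fixes X :: "'k::field_char_0^(2 \<times> 2)^(2 \<times> 2)"
  assumes "X ** split_form + split_form ** transpose X = 0"
  shows "\<exists>a b. trace a = 0 \<and> trace b = 0 \<and> X = kronecker_sum a b"
proof -
  have "\<forall>p1 p2 q1 q2. (X ** split_form + split_form ** transpose X) $ (p1, p2) $ (q1, q2) = 0"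
    using assms by simp
  note h = this[unfolded forall_2, simplified matrix_matrix_mult_def split_form_def
      symplectic2_def transpose_def sum_UNIV_2x2, simplified]
  define a :: "'k^2^2" where "a = (\<chi> i j. if i = 1 \<and> j = 1 then (X$(1,1)$(1,1) + X$(1,2)$(1,2)) / 2
     else if i = 1 \<and> j = 2 then X$(1,1)$(2,1) else if i = 2 \<and> j = 1 then X$(2,1)$(1,1)
     else - (X$(1,1)$(1,1) + X$(1,2)$(1,2)) / 2)"
  define b :: "'k^2^2" where "b = (\<chi> i j. if i = 1 \<and> j = 1 then (X$(1,1)$(1,1) - X$(1,2)$(1,2)) / 2
     else if i = 1 \<and> j = 2 then X$(1,1)$(1,2) else if i = 2 \<and> j = 1 then X$(1,2)$(1,1)
     else - (X$(1,1)$(1,1) - X$(1,2)$(1,2)) / 2)"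
  have e: "X$(1,1)$(2,2) = 0" "X$(1,2)$(2,2) = X$(1,1)$(2,1)" "X$(2,1)$(2,2) = X$(1,1)$(1,2)"
    "X$(2,2)$(2,2) = - X$(1,1)$(1,1)" "X$(1,2)$(2,1) = 0" "X$(2,1)$(2,1) = - X$(1,2)$(1,2)"
    "X$(2,2)$(2,1) = X$(1,2)$(1,1)" "X$(2,1)$(1,2) = 0" "X$(2,2)$(1,2) = X$(2,1)$(1,1)"
    "X$(2,2)$(1,1) = 0"
    using h by (simp_all add: eq_neg_iff_add_eq_0 add.commute)
  have "X = kronecker_sum a b"
    unfolding vec_eq_iff split_paired_All forall_2
    by (simp add: kronecker_sum_def a_def b_def e field_simps)
  moreover have "trace a = 0" "trace b = 0" by (simp_all add: a_def b_def trace_def sum_2 field_simps)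
  ultimately show ?thesis by blast
qed

lemma (in derivation_field) horizontal_scaled_split_form:
  assumes "D s = - (trace a + trace b) * s"
  shows "horizontal D (kronecker_sum a b) (mat s ** split_form)"
proof -
  have "dmat D (mat s ** split_form) + kronecker_sum a b ** (mat s ** split_form)
      + (mat s ** split_form) ** transpose (kronecker_sum a b)
    = mat (D s) ** split_form + mat s ** (mat (trace a + trace b) ** split_form)"
    by (simp add: dmat_mult dmat_mat dmat_split_form matrix_mul_assoc matrix_mat_mult_commute
        matrix_add_ldistrib add.assoc flip: kronecker_sum_split_form)
  also have "\<dots> = 0" by (simp add: vec_eq_iff mat_matrix_mult_nth assms algebra_simps)
  finally show ?thesis unfolding horizontal_def .
qed

lemma congruent_split_form:
  fixes P :: "'k::field^'n^(2 \<times> 2)"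
  assumes PQ: "P ** Q = mat 1" and QP: "Q ** P = mat 1" and s: "s \<noteq> 0"
    and F: "form_matrix F = Q ** (mat s ** split_form) ** transpose Q"
  shows "is_sym2 F \<and> nondegenerate F \<and> has_isotropic_subspace F 2"
proof -
  let ?G = "mat s ** split_form :: 'k^(2 \<times> 2)^(2 \<times> 2)"
  have "transpose ?G = ?G"
    by (simp add: matrix_transpose_mul split_form_sym matrix_mat_mult_commute)
  then have sym: "is_sym2 F"
    by (simp add: is_sym2_iff F matrix_transpose_mul matrix_mul_assoc)
  have "?G ** (mat (inverse s) ** split_form) = mat s ** (split_form ** mat (inverse s)) ** split_form"
    by (simp add: matrix_mul_assoc)
  also have "\<dots> = mat s ** mat (inverse s) ** (split_form ** split_form)"
    by (simp add: matrix_mat_mult_commute[of split_form] matrix_mul_assoc)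
  finally have G_inv: "?G ** (mat (inverse s) ** split_form) = mat 1"
    using s by (simp add: mat_mult_mat split_form_square)
  have "transpose Q ** transpose P = mat 1"
    using PQ by (simp flip: matrix_transpose_mul)
  then have "form_matrix F ** (transpose P ** (mat (inverse s) ** split_form) ** P) = mat 1"
    using QP G_inv by (simp add: F matrix_mul_assoc) (simp flip: matrix_mul_assoc)
  then have nd: "nondegenerate F" by (rule nondegenerate_if_right_inverse)
  define e1 e2 :: "'k^(2 \<times> 2)" where "e1 = axis (1, 1) 1" and "e2 = axis (2, 1) 1"
  define u v where "u = e1 v* P" and "v = e2 v* P"
  have uvQ: "(x *s u + y *s v) v* Q = x *s e1 + y *s e2" for x y
    by (simp add: u_def v_def vector_matrix_left_distrib scalar_vector_matrix_assoc
        vector_matrix_mul_assoc PQ)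
  have "\<forall>x y. x *s u + y *s v = 0 \<longrightarrow> x = 0 \<and> y = 0"
  proof (intro allI impI)
    fix x y assume "x *s u + y *s v = 0"
    then have "x *s e1 + y *s e2 = 0" using uvQ[of x y] by simp
    from arg_cong[OF this, of "\<lambda>w. w $ (1, 1)"] arg_cong[OF this, of "\<lambda>w. w $ (2, 1)"]
    show "x = 0 \<and> y = 0" by (simp add: e1_def e2_def axis_def)
  qed
  moreover have "bilin ?G (w v* Q) (w' v* Q) = 0" if "w \<in> {u, v}" "w' \<in> {u, v}" for w w'
    using that uvQ[of 1 0] uvQ[of 0 1] unfolding bilin_def sum_UNIV_2x2 mat_matrix_mult_nth
    by (auto simp: split_form_def symplectic2_def e1_def e2_def axis_def)
  ultimately have "has_isotropic_subspace F 2"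
    unfolding has_isotropic_subspace_2_iff sym_form_eq_bilin F bilin_congruence by blast
  with sym nd show ?thesis by blast
qed

lemma (in derivation_field) tensor_gauge_equiv_imp_split_form:
  fixes A :: "'k^'n^'n" and a b :: "'k^2^2"
  assumes "det_trivial_conn D a" and "det_trivial_conn D b"
    and A: "gauge_equiv D A (kronecker_sum a b)"
  shows "\<exists>F :: 'k^('n \<times> 'n). is_sym2 F \<and> conn_mod D (kronecker_sum A A) F = 0 \<and>
    nondegenerate F \<and> has_isotropic_subspace F 2"
proof -
  obtain c d where c: "c \<noteq> 0" "D c = c * trace a" and d: "d \<noteq> 0" "D d = d * trace b"
    using assms(1,2) unfolding det_trivial_conn_def by blast
  obtain Q P where QP: "Q ** P = mat 1" and PQ: "P ** Q = mat 1"
    and QA: "Q ** kronecker_sum a b = dmat D Q + A ** Q"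
    using gauge_equiv_sym[OF A] unfolding gauge_equiv_def by blast
  define s where "s = inverse (c * d)"
  have s: "s \<noteq> 0" using c d by (simp add: s_def)
  have cds: "c * d * s = 1" using c d by (simp add: s_def field_simps)
  have "D s = - D (c * d) * s * s" unfolding s_def by (rule D_inverse) (use c d in simp)
  also have "\<dots> = - (trace a + trace b) * (c * d * s) * s" by (simp add: D_mult c d algebra_simps)
  finally have "D s = - (trace a + trace b) * s" by (simp add: cds)
  then have hor: "horizontal D A (Q ** (mat s ** split_form) ** transpose Q)"
    by (rule horizontal_gauge[OF QA horizontal_scaled_split_form])
  obtain F where F: "form_matrix F = Q ** (mat s ** split_form) ** transpose Q"
    using form_matrix_surj by blast
  have "conn_mod D (kronecker_sum A A) F = 0"
    using hor by (simp add: conn_mod_kronecker_sum_eq_zero_iff F)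
  with congruent_split_form[OF PQ QP s F] show ?thesis by blast
qed

text \<open>Correcting the dual vectors \<open>z\<^sub>1\<close>, \<open>z\<^sub>2\<close> of \<open>u\<close>, \<open>v\<close> to be isotropic and orthogonal to each
  other gives a basis \<open>u, v, -z\<^sub>2', z\<^sub>1'\<close> in which the form is \<open>\<omega> \<otimes> \<omega>\<close>.\<close>
lemma hyperbolic_pair:
  fixes X :: "'k::field_char_0^'n^'n"
  assumes sym: "transpose X = X" and nd: "\<And>a. a v* X = 0 \<Longrightarrow> a = 0"
    and ind: "\<And>s t. s *s u + t *s v = 0 \<Longrightarrow> s = 0 \<and> t = 0"
    and iso: "\<forall>x\<in>{u, v}. \<forall>y\<in>{u, v}. bilin X x y = 0"
  obtains P :: "'k^'n^(2 \<times> 2)" where "P ** X ** transpose P = split_form"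
proof -
  obtain z1 z2 where uz: "bilin X u z1 = 1" "bilin X u z2 = 0" "bilin X v z1 = 0" "bilin X v z2 = 1"
    by (rule nondegenerate_dual_pair[OF nd ind])
  have zu: "bilin X z1 u = 1" "bilin X z2 u = 0" "bilin X z1 v = 0" "bilin X z2 v = 1"
    and zz: "bilin X z2 z1 = bilin X z1 z2"
    using uz bilin_sym[OF sym] by metis+
  have uv: "bilin X u u = 0" "bilin X u v = 0" "bilin X v u = 0" "bilin X v v = 0"
    using iso by auto
  define z1' where "z1' = z1 - (bilin X z1 z1 / 2) *s u"
  define z2' where "z2' = z2 - (bilin X z2 z2 / 2) *s v - bilin X z1 z2 *s u"
  define P :: "'k^'n^(2 \<times> 2)" where
    "P = (\<chi> p. if p = (1, 1) then u else if p = (1, 2) then v else if p = (2, 1) then - z2' else z1')"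
  have "P ** X ** transpose P = split_form"
    unfolding vec_eq_iff split_paired_All forall_2 congruence_nth
    by (simp add: P_def split_form_def symplectic2_def z1'_def z2'_def bilin_simps uv uz zu zz
        field_simps)
  then show ?thesis by (rule that)
qed

lemma split_form_congruence_invertible:
  fixes P :: "'k::field^4^(2 \<times> 2)"
  assumes "P ** X ** transpose P = split_form"
  obtains Q where "P ** Q = mat 1" "Q ** P = mat 1"
proof -
  define C where "C = X ** transpose P ** split_form"
  have PC: "P ** C = mat 1"
    using assms by (simp add: C_def matrix_mul_assoc split_form_square)
  then have "surj ((*v) P)" using matrix_right_invertible_surjective by blast
  moreover have "vec.dim (UNIV :: ('k^(2 \<times> 2)) set) = vec.dim (UNIV :: ('k^4) set)"
    unfolding vec_dim_card by simp
  ultimately have "inj ((*v) P)"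
    using vec.linear_surjective_imp_injective[OF matrix_vector_mul_linear_gen] by blast
  then obtain Q where QP: "Q ** P = mat 1" using matrix_left_invertible_injective by blast
  with PC inverse_matrices_unique[OF QP PC] show ?thesis by (intro that) auto
qed

lemma split_form_imp_tensor_gauge_equiv:
  fixes D :: "'k::field_char_0 \<Rightarrow> 'k" and A :: "'k^4^4" and F :: "'k^(4 \<times> 4)"
  assumes "derivation D" and sym: "is_sym2 F" and hor: "conn_mod D (kronecker_sum A A) F = 0"
    and nd: "nondegenerate F" and iso: "has_isotropic_subspace F 2"
  shows "\<exists>(a :: 'k^2^2) (b :: 'k^2^2). trace a = 0 \<and> trace b = 0 \<and> gauge_equiv D A (kronecker_sum a b)"
proof -
  interpret derivation_field D by (rule derivation_field.intro) (rule assms(1))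
  let ?X = "form_matrix F"
  obtain u v where ind: "\<And>s t. s *s u + t *s v = 0 \<Longrightarrow> s = 0 \<and> t = 0"
    and uv: "\<forall>x\<in>{u, v}. \<forall>y\<in>{u, v}. bilin ?X x y = 0"
    using iso unfolding has_isotropic_subspace_2_iff sym_form_eq_bilin by blast
  have "transpose ?X = ?X" and "\<And>a. a v* ?X = 0 \<Longrightarrow> a = 0"
    using sym nd by (simp_all add: is_sym2_iff nondegenerate_iff)
  then obtain P :: "'k^4^(2 \<times> 2)" where P: "P ** ?X ** transpose P = split_form"
    by (rule hyperbolic_pair[OF _ _ ind uv])
  obtain Q where PQ: "P ** Q = mat 1" and QP: "Q ** P = mat 1"
    by (rule split_form_congruence_invertible[OF P])
  have "horizontal D A ?X" using hor by (simp add: conn_mod_kronecker_sum_eq_zero_iff)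
  then obtain B where "gauge_equiv D A B" "B ** split_form + split_form ** transpose B = 0"
    using horizontal_constant_form_gauge[OF PQ QP] P dmat_split_form by metis
  with split_form_lie_algebra show ?thesis by blast
qed

lemma tensor_gauge_equiv_iff_split_form:
  fixes D :: "'k::field_char_0 \<Rightarrow> 'k" and A :: "'k^4^4"
  assumes "derivation D"
  shows "(\<exists>(a :: 'k^2^2) (b :: 'k^2^2). det_trivial_conn D a \<and> det_trivial_conn D b \<and>
            gauge_equiv D A (kronecker_sum a b))
     \<longleftrightarrow> (\<exists>F :: 'k^(4 \<times> 4). is_sym2 F \<and> conn_mod D (kronecker_sum A A) F = 0 \<and>
            nondegenerate F \<and> has_isotropic_subspace F 2)"
    (is "?tensor \<longleftrightarrow> ?split")
proof -
  interpret derivation_field D by (rule derivation_field.intro) (rule assms)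
  have traceless: "det_trivial_conn D a" if "trace a = 0" for a :: "'k^2^2"
    unfolding det_trivial_conn_def using that by (intro exI[of _ 1]) simp
  show ?thesis
  proof
    assume ?tensor
    then obtain a b :: "'k^2^2" where "det_trivial_conn D a" "det_trivial_conn D b"
      "gauge_equiv D A (kronecker_sum a b)" by blast
    then show ?split by (rule tensor_gauge_equiv_imp_split_form)
  next
    assume ?split
    then obtain F :: "'k^(4 \<times> 4)" where F: "is_sym2 F" "conn_mod D (kronecker_sum A A) F = 0"
      "nondegenerate F" "has_isotropic_subspace F 2" by blast
    obtain a b :: "'k^2^2" where "trace a = 0" "trace b = 0" "gauge_equiv D A (kronecker_sum a b)"
      using split_form_imp_tensor_gauge_equiv[OF assms F] by blast
    with traceless show ?tensor by blast
  qed
qed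

theorem theorem6p2:
  fixes D :: "'k::field_char_0 \<Rightarrow> 'k" and \<delta> :: "'k^4 \<Rightarrow> 'k^4"
  assumes "derivation D"
    and "diff_module D \<delta>"
    and "det_trivial D \<delta>"
  shows "(\<exists>(\<delta>A :: 'k^2 \<Rightarrow> 'k^2) (\<delta>B :: 'k^2 \<Rightarrow> 'k^2).
            diff_module D \<delta>A \<and> diff_module D \<delta>B \<and> det_trivial D \<delta>A \<and> det_trivial D \<delta>B \<and>
            dmod_iso \<delta> (tensor_mod D \<delta>A \<delta>B))
     \<longleftrightarrow> (\<exists>F :: 'k^(4 \<times> 4). is_sym2 F \<and> tensor_mod D \<delta> \<delta> F = 0 \<and>
            nondegenerate F \<and> has_isotropic_subspace F 2)"
proof -
  interpret derivation_field D by (rule derivation_field.intro) (rule assms(1))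
  show ?thesis
    unfolding tensor_decomposition_iff_gauge_equiv[OF assms(2)] unfolding tensor_mod_eq_conn_mod
    by (rule tensor_gauge_equiv_iff_split_form[OF assms(1)])
qed

end
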